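(* The map sending a lineage $\mathcal{L}$ to its hierarchical generator $(\mathcal{B}^0\cup\mathrm{ch}(\mathcal{L}))\setminus\mathcal{L}$ is injective: if two lineages $\mathcal{L},\bar{\mathcal{L}}$ have the same hierarchical generator, then $\mathcal{L}=\bar{\mathcal{L}}$ (and their sets $\mathcal{B}^0\cup\mathrm{ch}(\mathcal{L})$, $\mathcal{B}^0\cup\mathrm{ch}(\bar{\mathcal{L}})$ coincide).
   Context: Fix integers $d\ge1$, $n\ge2$, $m\ge2$; $s=n-1$, $p=m-1$. B-splines $\varphi^\ell_{\vec i}(\vec x)=\prod_kQ(n^\ell x_k-i_k)$ for $\ell\in\mathbb{Z}_{\ge0}$, $\vec i\in\mathbb{Z}^d$, with $Q$ the uniform B-spline of order $m$ with knots $0,\dots,m$; $\mathfrak{B}$ is the set of all of them. $\mathcal{B}^0=\{\varphi^0_{\vec i}:\vec i\in[-p:0]^d\}$. Children: $\mathrm{ch}(\varphi^\ell_{\vec i})=\{\varphi^{\ell+1}_{\vec k}:n\vec i\le\vec k\le n\vec i+sm\}$ (componentwise), $\mathrm{ch}(\mathcal{F})=\bigcup_{\varphi\in\mathcal{F}}\mathrm{ch}(\varphi)$. A lineage is a finite set $\mathcal{L}\subset\mathfrak{B}$ with $\mathcal{L}\subset\mathcal{B}^0\cup\mathrm{ch}(\mathcal{L})$; its hierarchical generator is $(\mathcal{B}^0\cup\mathrm{ch}(\mathcal{L}))\setminus\mathcal{L}$. *)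

theory Defs
  imports "HOL-Analysis.Analysis"
begin

text \<open>Uniform cardinal B-spline of order k with knots 0..k (Cox--de Boor recursion).
  Included for documentation: a B-spline phi^l_i is identified with its label (l, i).\<close>
fun cardQ :: "nat \<Rightarrow> real \<Rightarrow> real" where
  "cardQ 0 x = 0"
| "cardQ (Suc 0) x = (if 0 \<le> x \<and> x < 1 then 1 else 0)"
| "cardQ (Suc (Suc k)) x =
     (x * cardQ (Suc k) x + (real (Suc (Suc k)) - x) * cardQ (Suc k) (x - 1)) / real (Suc k)"

definition bspline :: "nat \<Rightarrow> nat \<Rightarrow> nat \<Rightarrow> int^'d \<Rightarrow> real^'d \<Rightarrow> real" where
  "bspline n m l i x = (\<Prod>k\<in>UNIV. cardQ m (real n ^ l * x $ k - real_of_int (i $ k)))"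

text \<open>B-spline labels: (level l, multi-index i); the label (l,i) stands for phi^l_i.\<close>
type_synonym 'd blabel = "nat \<times> (int^'d)"

definition B0 :: "nat \<Rightarrow> 'd::finite blabel set" where
  "B0 m = {(0, i) | i. \<forall>k. - int (m - 1) \<le> i $ k \<and> i $ k \<le> 0}"

definition ch :: "nat \<Rightarrow> nat \<Rightarrow> 'd::finite blabel \<Rightarrow> 'd blabel set" where
  "ch n m b = {(Suc (fst b), k) | k. \<forall>j. int n * (snd b) $ j \<le> k $ j
                  \<and> k $ j \<le> int n * (snd b) $ j + int (n - 1) * int m}"

definition chS :: "nat \<Rightarrow> nat \<Rightarrow> 'd::finite blabel set \<Rightarrow> 'd blabel set" where
  "chS n m F = (\<Union>b\<in>F. ch n m b)"

definition lineage :: "nat \<Rightarrow> nat \<Rightarrow> 'd::finite blabel set \<Rightarrow> bool" where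
  "lineage n m L \<longleftrightarrow> finite L \<and> L \<subseteq> B0 m \<union> chS n m L"

definition hgen :: "nat \<Rightarrow> nat \<Rightarrow> 'd::finite blabel set \<Rightarrow> 'd blabel set" where
  "hgen n m L = (B0 m \<union> chS n m L) - L"

end

theory Submission
  imports Defs
begin

text \<open>Induction on the level: whether a B-spline of level \<open>l\<close> lies in
  \<open>B\<^sup>0 \<union> ch(\<L>)\<close> depends only on the members of \<open>\<L>\<close> of level \<open>< l\<close>, and inside
  that set \<open>\<L>\<close> is the complement of the generator. So equal generators
  propagate agreement of two lineages from one level to the next.\<close>

lemma fst_mem_ch: "y \<in> ch n m b \<Longrightarrow> fst y = Suc (fst b)"
  unfolding ch_def by auto

lemma mem_chS_cong_lower_levels:
  assumes "\<And>b. fst b < fst x \<Longrightarrow> b \<in> L \<longleftrightarrow> b \<in> L'"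
  shows "x \<in> chS n m L \<longleftrightarrow> x \<in> chS n m L'"
proof -
  have "b \<in> L \<longleftrightarrow> b \<in> L'" if "x \<in> ch n m b" for b
    using assms fst_mem_ch[OF that] by simp
  then show ?thesis
    unfolding chS_def by blast
qed

lemma lineage_mem_iff:
  "lineage n m L \<Longrightarrow> x \<in> L \<longleftrightarrow> x \<in> B0 m \<union> chS n m L \<and> x \<notin> hgen n m L"
  unfolding lineage_def hgen_def by auto

lemma lineage_eq_if_hgen_eq:
  assumes L: "lineage n m L" and L': "lineage n m L'"
    and hgen: "hgen n m L = hgen n m L'"
  shows "L = L'"
proof -
  have "x \<in> L \<longleftrightarrow> x \<in> L'" for x
  proof (induction "fst x" arbitrary: x rule: less_induct)
    case less
    then have "x \<in> chS n m L \<longleftrightarrow> x \<in> chS n m L'"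
      by (intro mem_chS_cong_lower_levels) simp
    then show ?case
      using lineage_mem_iff[OF L, of x] lineage_mem_iff[OF L', of x] hgen by auto
  qed
  then show ?thesis
    by blast
qed

theorem lemma4p3:
  fixes n m :: nat and L L' :: "'d::finite blabel set"
  assumes "n \<ge> 2" and "m \<ge> 2"
    and "lineage n m L" and "lineage n m L'"
    and "hgen n m L = hgen n m L'"
  shows "L = L' \<and> B0 m \<union> chS n m L = B0 m \<union> chS n m L'"
  using lineage_eq_if_hgen_eq[OF assms(3-5)] by simp

end
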